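(* Let $t_0\ge 0$ and let $\beta(t)$, $\gamma(t)$ be continuous real-valued functions on $[t_0,\infty)$. Let $\alpha:[t_0,\infty)\times[0,\infty)\to[0,\infty)$ be continuous with respect to $t$ on $[t_0,\infty)$, locally Lipschitz-continuous and nondecreasing with respect to $y$. Suppose there exists a function $\mu\in C^1[t_0,\infty)$ with $\mu(t)>0$ such that $$\alpha\Big(t,\frac{1}{\mu(t)}\Big)+\beta(t)\le \frac{1}{\mu(t)}\Big[\gamma(t)-\frac{\dot\mu(t)}{\mu(t)}\Big],\qquad t\ge t_0.$$ Let $g(t)\ge 0$ be a (differentiable) solution to the inequality $$\dot g(t)\le -\gamma(t)g(t)+\alpha(t,g(t))+\beta(t),\qquad t\ge t_0,$$ such that $\mu(t_0)g(t_0)<1$. Then $g(t)$ exists globally (i.e., is defined for all $t\ge t_0$) and $$0\le g(t)<\frac{1}{\mu(t)},\qquad \forall t\ge t_0.$$ Consequently, if $\lim_{t\to\infty}\mu(t)=\infty$, then $\lim_{t\to\infty}g(t)=0$.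
   Context: $\dot g = dg/dt$. *)

theory Defs
  imports "HOL-Analysis.Analysis"
begin

end

theory Submission
  imports Defs
begin

text \<open>Put \<open>w = g - 1/\<mu>\<close>. By monotonicity of \<open>\<alpha>\<close> and the hypothesis on \<open>\<mu>\<close>, as long as
  \<open>w < 0\<close> it satisfies the linear differential inequality \<open>w' \<le> -\<gamma> w\<close>, so \<open>w \<cdot> exp (\<integral> \<gamma>)\<close>
  is nonincreasing there. Hence \<open>w\<close> can never climb from \<open>w(t\<^sub>0) < 0\<close> back to \<open>0\<close>, which gives
  \<open>g < 1/\<mu>\<close>; the limit statement follows by squeezing \<open>g\<close> between \<open>0\<close> and \<open>1/\<mu>\<close>.\<close>

lemma first_nonneg_point:
  fixes w :: "real \<Rightarrow> real"
  assumes "a \<le> t" and "continuous_on {a..t} w" and "w a < 0" and "w t \<ge> 0"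
  obtains T where "a < T" "T \<le> t" "w T \<ge> 0" "\<And>s. a \<le> s \<Longrightarrow> s < T \<Longrightarrow> w s < 0"
proof -
  define S where "S = {a..t} \<inter> w -` {0..}"
  have "closed S"
    unfolding S_def by (rule continuous_closed_preimage[OF assms(2)]) auto
  moreover have "t \<in> S" "bdd_below S"
    using assms by (auto simp: S_def bdd_below_def)
  ultimately have "Inf S \<in> S"
    using closed_contains_Inf by blast
  moreover have "w s < 0" if "a \<le> s" "s < Inf S" for s
  proof (rule ccontr)
    assume "\<not> w s < 0"
    then have "s \<in> S" using that \<open>Inf S \<in> S\<close> by (auto simp: S_def)
    then show False using that cInf_lower[OF _ \<open>bdd_below S\<close>] by force
  qed
  ultimately show thesis
    using that[of "Inf S"] assms(3) by (force simp: S_def)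
qed

lemma linear_differential_inequality:
  fixes w w' \<gamma> :: "real \<Rightarrow> real"
  assumes "a \<le> b" and \<gamma>: "continuous_on {a..b} \<gamma>"
    and w: "\<And>s. s \<in> {a..b} \<Longrightarrow> (w has_real_derivative w' s) (at s within {a..b})"
    and ineq: "\<And>s. a < s \<Longrightarrow> s < b \<Longrightarrow> w' s \<le> - \<gamma> s * w s"
  shows "w b * exp (integral {a..b} \<gamma>) \<le> w a"
proof -
  define \<phi> where "\<phi> s = w s * exp (integral {a..s} \<gamma>)" for s
  define \<phi>' where "\<phi>' s = (w' s + \<gamma> s * w s) * exp (integral {a..s} \<gamma>)" for s
  have \<phi>: "(\<phi> has_real_derivative \<phi>' s) (at s within {a..b})" if "s \<in> {a..b}" for s
    unfolding \<phi>_def \<phi>'_def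
    using w[OF that] integral_has_real_derivative[OF \<gamma> that]
    by (auto intro!: derivative_eq_intros simp: algebra_simps)
  have "\<phi> b \<le> \<phi> a"
  proof (rule DERIV_nonpos_imp_decreasing_open[OF \<open>a \<le> b\<close>])
    show "continuous_on {a..b} \<phi>"
      by (rule DERIV_continuous_on[OF \<phi>])
    fix s assume "a < s" "s < b"
    then have "(\<phi> has_real_derivative \<phi>' s) (at s)"
      using \<phi>[of s] by (simp add: at_within_Icc_at)
    moreover have "\<phi>' s \<le> 0"
      using ineq[OF \<open>a < s\<close> \<open>s < b\<close>] by (simp add: \<phi>'_def mult_nonpos_nonneg)
    ultimately show "\<exists>y. (\<phi> has_real_derivative y) (at s) \<and> y \<le> 0" by blast
  qed
  then show ?thesis by (simp add: \<phi>_def)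
qed

lemma negative_under_linear_differential_inequality:
  fixes w w' \<gamma> :: "real \<Rightarrow> real"
  assumes \<gamma>: "continuous_on {a..} \<gamma>"
    and w: "\<And>s. s \<ge> a \<Longrightarrow> (w has_real_derivative w' s) (at s within {a..})"
    and ineq: "\<And>s. s > a \<Longrightarrow> w s < 0 \<Longrightarrow> w' s \<le> - \<gamma> s * w s"
    and init: "w a < 0" and "t \<ge> a"
  shows "w t < 0"
proof (rule ccontr)
  assume "\<not> w t < 0"
  moreover have "continuous_on {a..t} w"
    using DERIV_continuous_on[of "{a..}" w w'] w continuous_on_subset by fastforce
  ultimately obtain T where T: "a < T" "T \<le> t" "w T \<ge> 0"
    and below: "\<And>s. a \<le> s \<Longrightarrow> s < T \<Longrightarrow> w s < 0"
    using first_nonneg_point[OF \<open>t \<ge> a\<close>] init by (metis not_less)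
  have "w T * exp (integral {a..T} \<gamma>) \<le> w a"
  proof (rule linear_differential_inequality)
    show "continuous_on {a..T} \<gamma>"
      using \<gamma> by (rule continuous_on_subset) auto
    show "(w has_real_derivative w' s) (at s within {a..T})" if "s \<in> {a..T}" for s
      using w[of s] that by (auto intro: DERIV_subset)
    show "w' s \<le> - \<gamma> s * w s" if "a < s" "s < T" for s
      using ineq below that by simp
  qed (use T in simp)
  with T init show False
    by (smt (verit) exp_gt_zero zero_le_mult_iff)
qed

theorem theorem1:
  fixes t0 :: real
    and \<alpha> :: "real \<Rightarrow> real \<Rightarrow> real"
    and \<beta> \<gamma> \<mu> \<mu>' g g' :: "real \<Rightarrow> real"
  assumes t0: "t0 \<ge> 0"
    and \<beta>_cont: "continuous_on {t0..} \<beta>"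
    and \<gamma>_cont: "continuous_on {t0..} \<gamma>"
    and \<alpha>_nonneg: "\<And>t y. t \<ge> t0 \<Longrightarrow> y \<ge> 0 \<Longrightarrow> \<alpha> t y \<ge> 0"
    and \<alpha>_cont_t: "\<And>y. y \<ge> 0 \<Longrightarrow> continuous_on {t0..} (\<lambda>t. \<alpha> t y)"
    and \<alpha>_lip: "local_lipschitz {t0..} {0..} \<alpha>"
    and \<alpha>_mono: "\<And>t. t \<ge> t0 \<Longrightarrow> mono_on {0..} (\<alpha> t)"
    and \<mu>_deriv: "\<And>t. t \<ge> t0 \<Longrightarrow> (\<mu> has_real_derivative \<mu>' t) (at t within {t0..})"
    and \<mu>'_cont: "continuous_on {t0..} \<mu>'"
    and \<mu>_pos: "\<And>t. t \<ge> t0 \<Longrightarrow> \<mu> t > 0"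
    and \<mu>_ineq: "\<And>t. t \<ge> t0 \<Longrightarrow>
        \<alpha> t (1 / \<mu> t) + \<beta> t \<le> (1 / \<mu> t) * (\<gamma> t - \<mu>' t / \<mu> t)"
    and g_deriv: "\<And>t. t \<ge> t0 \<Longrightarrow> (g has_real_derivative g' t) (at t within {t0..})"
    and g_nonneg: "\<And>t. t \<ge> t0 \<Longrightarrow> g t \<ge> 0"
    and g_ineq: "\<And>t. t \<ge> t0 \<Longrightarrow> g' t \<le> - \<gamma> t * g t + \<alpha> t (g t) + \<beta> t"
    and init: "\<mu> t0 * g t0 < 1"
  shows "(\<forall>t\<ge>t0. 0 \<le> g t \<and> g t < 1 / \<mu> t) \<and>
         (filterlim \<mu> at_top at_top \<longrightarrow> (g \<longlongrightarrow> 0) at_top)"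
proof -
  have bound: "g t - 1 / \<mu> t < 0" if "t \<ge> t0" for t
  proof (rule negative_under_linear_differential_inequality[OF \<gamma>_cont _ _ _ that])
    show "((\<lambda>s. g s - 1 / \<mu> s) has_real_derivative g' s + \<mu>' s / (\<mu> s)\<^sup>2) (at s within {t0..})"
      if "s \<ge> t0" for s
      using g_deriv[OF that] \<mu>_deriv[OF that] \<mu>_pos[OF that]
      by (auto intro!: derivative_eq_intros simp: power2_eq_square)
    show "g' s + \<mu>' s / (\<mu> s)\<^sup>2 \<le> - \<gamma> s * (g s - 1 / \<mu> s)"
      if "s > t0" "g s - 1 / \<mu> s < 0" for s
    proof -
      have s: "s \<ge> t0" using that by simp
      have "\<alpha> s (g s) \<le> \<alpha> s (1 / \<mu> s)"
        using \<alpha>_mono[OF s] g_nonneg[OF s] \<mu>_pos[OF s] that(2) by (auto simp: mono_on_def)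
      then show ?thesis
        using g_ineq[OF s] \<mu>_ineq[OF s] by (simp add: power2_eq_square algebra_simps)
    qed
    show "g t0 - 1 / \<mu> t0 < 0"
      using init \<mu>_pos[of t0] by (simp add: field_simps)
  qed
  moreover have "(g \<longlongrightarrow> 0) at_top" if "filterlim \<mu> at_top at_top"
  proof (rule tendsto_sandwich[OF _ _ tendsto_const tendsto_inverse_0_at_top[OF that]])
    show "\<forall>\<^sub>F t in at_top. 0 \<le> g t" "\<forall>\<^sub>F t in at_top. g t \<le> inverse (\<mu> t)"
      using eventually_ge_at_top[of t0]
      by (eventually_elim, use bound g_nonneg in \<open>force simp: divide_inverse\<close>)+
  qed
  ultimately show ?thesis using g_nonneg by simp
qed

end
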